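(* Let $q\ge2$ and $n\ge3$ be integers, and let $\mathcal{A}\subseteq\mathcal{N}_{q,n}$ with $|\mathcal{A}|\ge3^{q-1}$. Then $$\min_{\mathbf{t},\mathbf{t}'\in\mathcal{A},\ \mathbf{t}\ne\mathbf{t}'}d_{\mathrm c}(\mathbf{t},\mathbf{t}')\le2(q-1)\frac{n}{|\mathcal{A}|^{1/(q-1)}}.$$
   Context: $\mathcal{N}_{q,n}=\{\mathbf{t}\in\mathbb{Z}_{\ge0}^q:\sum_{i=1}^qt_i=n\}$; $d_{\mathrm c}(\mathbf{t},\mathbf{t}')=\frac12\sum_{i=1}^q|t_i-t_i'|$. *)

theory Defs
  imports "HOL-Analysis.Analysis"
begin

text \<open>Compositions: vectors t = (t_1,...,t_q) of nonnegative integers, represented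
  as functions nat => nat indexed by 0..q-1 and equal to 0 outside this range.\<close>
definition comps :: "nat \<Rightarrow> nat \<Rightarrow> (nat \<Rightarrow> nat) set" where
  "comps q n = {t. (\<forall>i\<ge>q. t i = 0) \<and> (\<Sum>i<q. t i) = n}"

definition dc :: "nat \<Rightarrow> (nat \<Rightarrow> nat) \<Rightarrow> (nat \<Rightarrow> nat) \<Rightarrow> real" where
  "dc q t t' = (1/2) * (\<Sum>i<q. \<bar>real (t i) - real (t' i)\<bar>)"

end

theory Submission
  imports Defs
begin

text \<open>Cut the cube [0,n]^(q-1) of the first q-1 coordinates into cells of side
  w = 2n / |A|^(1/(q-1)). There are fewer cells than points, so two points of A share
  a cell and differ by less than w in each of the first q-1 coordinates. Since both
  coordinate sums equal n, the last coordinates differ by at most the sum of the other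
  differences, so the two points are at distance at most (q-1) w.\<close>

lemma floor_divide_eq_imp_abs_diff_less:
  fixes x y w :: real
  assumes "w > 0" and "\<lfloor>x / w\<rfloor> = \<lfloor>y / w\<rfloor>"
  shows "\<bar>x - y\<bar> < w"
proof -
  have "\<bar>x / w - y / w\<bar> < 1"
    using assms(2) floor_correct[of "x / w"] floor_correct[of "y / w"] by linarith
  then show ?thesis
    using assms(1) by (simp add: abs_divide flip: diff_divide_distrib)
qed

lemma comps_le: "t \<in> comps q n \<Longrightarrow> t i \<le> n"
  unfolding comps_def
  by (cases "i < q") (auto intro: order_trans[OF member_le_sum[of i "{..<q}" t]])

lemma dc_Suc_le_sum_lessThan:
  assumes "t \<in> comps (Suc k) n" and "t' \<in> comps (Suc k) n"
  shows "dc (Suc k) t t' \<le> (\<Sum>i<k. \<bar>real (t i) - real (t' i)\<bar>)"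
proof -
  let ?S = "\<Sum>i<k. \<bar>real (t i) - real (t' i)\<bar>"
  have "(\<Sum>i<k. real (t i)) + real (t k) = real (t' k) + (\<Sum>i<k. real (t' i))"
    using assms unfolding comps_def by (auto simp flip: of_nat_sum of_nat_add)
  then have "\<bar>real (t k) - real (t' k)\<bar> = \<bar>\<Sum>i<k. real (t i) - real (t' i)\<bar>"
    by (simp add: sum_subtractf abs_minus_commute)
  also have "\<dots> \<le> ?S"
    by (rule sum_abs)
  finally have "\<bar>real (t k) - real (t' k)\<bar> \<le> ?S" .
  then show ?thesis
    unfolding dc_def by simp
qed

lemma exists_pair_close_on_lessThan:
  fixes A :: "(nat \<Rightarrow> nat) set" and w :: real
  assumes "w > 0" and "\<forall>t\<in>A. \<forall>i<k. t i \<le> n"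
    and "(real n / w + 1) ^ k < real (card A)"
  obtains t t' where "t \<in> A" "t' \<in> A" "t \<noteq> t'"
    and "\<And>i. i < k \<Longrightarrow> \<bar>real (t i) - real (t' i)\<bar> < w"
proof -
  define N where "N = nat \<lfloor>real n / w\<rfloor>"
  define cell where "cell t = restrict (\<lambda>i. nat \<lfloor>real (t i) / w\<rfloor>) {..<k}" for t :: "nat \<Rightarrow> nat"
  define cells where "cells = PiE {..<k} (\<lambda>_. {..N})"
  have "cell t \<in> cells" if "t \<in> A" for t
    unfolding cell_def cells_def restrict_PiE_iff N_def using assms(1,2) that
    by (auto intro!: nat_mono floor_mono divide_right_mono)
  then have "cell ` A \<subseteq> cells"
    by blast
  then have "card (cell ` A) \<le> card cells"
    unfolding cells_def by (intro card_mono finite_PiE) auto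
  also have "real (card cells) = real (N + 1) ^ k"
    unfolding cells_def by (simp add: card_PiE)
  also have "\<dots> \<le> (real n / w + 1) ^ k"
    unfolding N_def using assms(1) by (intro power_mono) auto
  finally have "card (cell ` A) < card A"
    using assms(3) by linarith
  then obtain t t' where "t \<in> A" "t' \<in> A" "t \<noteq> t'" and same_cell: "cell t = cell t'"
    using pigeonhole unfolding inj_on_def by blast
  moreover have "\<bar>real (t i) - real (t' i)\<bar> < w" if "i < k" for i
  proof -
    have "nat \<lfloor>real (t i) / w\<rfloor> = nat \<lfloor>real (t' i) / w\<rfloor>"
      using fun_cong[OF same_cell, of i] that unfolding cell_def by simp
    then have "\<lfloor>real (t i) / w\<rfloor> = \<lfloor>real (t' i) / w\<rfloor>"
      using assms(1) by (simp add: nat_eq_iff2)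
    then show ?thesis
      by (rule floor_divide_eq_imp_abs_diff_less[OF assms(1)])
  qed
  ultimately show ?thesis
    using that by blast
qed

lemma exists_pair_comps_dc_le:
  fixes w :: real
  assumes "A \<subseteq> comps (Suc k) n" and "w > 0"
    and "(real n / w + 1) ^ k < real (card A)"
  obtains t t' where "t \<in> A" "t' \<in> A" "t \<noteq> t'" and "dc (Suc k) t t' \<le> real k * w"
proof -
  have "\<forall>t\<in>A. \<forall>i<k. t i \<le> n"
    using assms(1) comps_le by blast
  then obtain t t' where tt': "t \<in> A" "t' \<in> A" "t \<noteq> t'"
    and close: "\<And>i. i < k \<Longrightarrow> \<bar>real (t i) - real (t' i)\<bar> < w"
    using exists_pair_close_on_lessThan[OF assms(2) _ assms(3)] by blast
  have "dc (Suc k) t t' \<le> (\<Sum>i<k. \<bar>real (t i) - real (t' i)\<bar>)"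
    using tt' assms(1) by (intro dc_Suc_le_sum_lessThan) auto
  also have "\<dots> \<le> real k * w"
    using sum_bounded_above[of "{..<k}" _ w] close by (simp add: less_imp_le)
  finally show ?thesis
    using that tt' by blast
qed

lemma Min_distinct_pairs_le:
  assumes "finite A" and "t \<in> A" and "t' \<in> A" and "t \<noteq> t'"
  shows "Min {f x y | x y. x \<in> A \<and> y \<in> A \<and> x \<noteq> y} \<le> f t t'"
proof (rule Min_le)
  have "{f x y | x y. x \<in> A \<and> y \<in> A \<and> x \<noteq> y} \<subseteq> case_prod f ` (A \<times> A)"
    by auto
  moreover have "finite (case_prod f ` (A \<times> A))"
    using assms(1) by simp
  ultimately show "finite {f x y | x y. x \<in> A \<and> y \<in> A \<and> x \<noteq> y}"
    by (rule finite_subset)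
qed (use assms in blast)

theorem lemma17:
  fixes q n :: nat and A :: "(nat \<Rightarrow> nat) set"
  assumes "q \<ge> 2" and "n \<ge> 3"
    and "A \<subseteq> comps q n"
    and "real (card A) \<ge> 3 ^ (q - 1)"
  shows "Min {dc q t t' | t t'. t \<in> A \<and> t' \<in> A \<and> t \<noteq> t'}
           \<le> 2 * (real q - 1) * real n / (real (card A) powr (1 / (real q - 1)))"
proof -
  define k where "k = q - 1"
  have q: "q = Suc k" "real q - 1 = real k" and "k > 0"
    using assms(1) unfolding k_def by auto
  define r where "r = root k (card A)"
  have r_powr: "r = real (card A) powr (1 / (real q - 1))"
    unfolding r_def q(2) using \<open>k > 0\<close> by (simp add: root_powr_inverse)
  have "root k (3 ^ k) \<le> r"
    unfolding r_def using assms(4) \<open>k > 0\<close> k_def by simp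
  then have "r \<ge> 3"
    using \<open>k > 0\<close> by (simp add: real_root_power_cancel)
  define w where "w = 2 * real n / r"
  have "w > 0"
    using assms(2) \<open>r \<ge> 3\<close> unfolding w_def by simp
  have "(real n / w + 1) ^ k < r ^ k"
    using assms(2) \<open>r \<ge> 3\<close> \<open>k > 0\<close> unfolding w_def by (intro power_strict_mono) auto
  also have r_pow: "r ^ k = real (card A)"
    unfolding r_def using \<open>k > 0\<close> by simp
  finally have "(real n / w + 1) ^ k < real (card A)" .
  then obtain t t' where tt': "t \<in> A" "t' \<in> A" "t \<noteq> t'" and "dc q t t' \<le> real k * w"
    using exists_pair_comps_dc_le[OF _ \<open>w > 0\<close>] assms(3) unfolding q(1) by blast
  have "card A > 0"
    using r_pow \<open>r \<ge> 3\<close> by (metis of_nat_0_less_iff zero_less_power less_le_trans zero_less_numeral)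
  then have "Min {dc q t t' | t t'. t \<in> A \<and> t' \<in> A \<and> t \<noteq> t'} \<le> dc q t t'"
    using tt' by (intro Min_distinct_pairs_le card_ge_0_finite)
  also have "\<dots> \<le> real k * w"
    by fact
  also have "\<dots> = 2 * (real q - 1) * real n / (real (card A) powr (1 / (real q - 1)))"
    unfolding w_def r_powr q(2) by simp
  finally show ?thesis .
qed

end
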